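(* Let $P$ be a $3$-dimensional subspace of $\mathbb{R}^7$. Then the $3$-dimensional subspaces $\Lambda^2(P)$ and $\Psi(P)$ of $\Lambda^2(\mathbb{R}^7)$ are orthogonal to each other.
   Context: Equip $\mathbb{R}^7$ with its standard inner product, orientation and basis $e_1,\dots,e_7$. Let $\varphi = e_{123} - e_{167} - e_{527} - e_{563} - e_{415} - e_{426} - e_{437}$ ($e_{ijk} = e_i\wedge e_j\wedge e_k$) and $\psi = \star\varphi = e_{4567} - e_{4523} - e_{4163} - e_{4127} - e_{2637} - e_{1537} - e_{1526}$. For $u,v$: $u\wedge v$ is the 2-form $(a,b)\mapsto \langle u,a\rangle\langle v,b\rangle - \langle u,b\rangle\langle v,a\rangle$ and $\Psi_{uv}$ is the 2-form $(a,b)\mapsto\psi(u,v,a,b)$. $\Lambda^2(P) = \mathrm{Span}\{u\wedge v: u,v\in P\}$, $\Psi(P) = \mathrm{Span}\{\Psi_{uv} : u,v\in P\}$. The inner product on $\Lambda^2$ is $\langle X,Y\rangle = \sum_{i,j} X(e_i,e_j)Y(e_i,e_j)$. *)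

theory Defs
  imports "HOL-Analysis.Analysis" "HOL-Library.Function_Algebras"
begin

type_synonym vec7 = "real ^ 7"
type_synonym form2 = "vec7 \<Rightarrow> vec7 \<Rightarrow> real"

text \<open>Standard basis e_1,...,e_7 of R^7; e_k is the k-th coordinate vector
  (index k-1 of the finite index type 7, whose elements are 0,...,6).\<close>
definition idx7 :: "nat \<Rightarrow> 7" where "idx7 k = of_nat (k - 1)"

definition ebasis :: "nat \<Rightarrow> vec7" where "ebasis k = axis (idx7 k) 1"

text \<open>Coordinate dual 4-form e_i ^ e_j ^ e_k ^ e_l (determinant of the 4x4 matrix
  of the relevant coordinates).\<close>
definition e4 :: "nat \<Rightarrow> nat \<Rightarrow> nat \<Rightarrow> nat \<Rightarrow> vec7 \<Rightarrow> vec7 \<Rightarrow> vec7 \<Rightarrow> vec7 \<Rightarrow> real" where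
  "e4 i j k l a b c d =
     (\<Sum>p | p permutes {0..<4}.
        of_int (sign p) * (\<Prod>r<4. ([a, b, c, d] ! p r) $ idx7 ([i, j, k, l] ! r)))"

text \<open>psi = star phi = e4567 - e4523 - e4163 - e4127 - e2637 - e1537 - e1526\<close>
definition psi :: "vec7 \<Rightarrow> vec7 \<Rightarrow> vec7 \<Rightarrow> vec7 \<Rightarrow> real" where
  "psi a b c d =
      e4 4 5 6 7 a b c d - e4 4 5 2 3 a b c d - e4 4 1 6 3 a b c d - e4 4 1 2 7 a b c d
    - e4 2 6 3 7 a b c d - e4 1 5 3 7 a b c d - e4 1 5 2 6 a b c d"

definition wedge2 :: "vec7 \<Rightarrow> vec7 \<Rightarrow> form2" where
  "wedge2 u v = (\<lambda>a b. (u \<bullet> a) * (v \<bullet> b) - (u \<bullet> b) * (v \<bullet> a))"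

definition Psi2 :: "vec7 \<Rightarrow> vec7 \<Rightarrow> form2" where
  "Psi2 u v = (\<lambda>a b. psi u v a b)"

definition scale2 :: "real \<Rightarrow> form2 \<Rightarrow> form2" where
  "scale2 r X = (\<lambda>a b. r * X a b)"

definition Lambda2 :: "vec7 set \<Rightarrow> form2 set" where
  "Lambda2 P = module.span scale2 {wedge2 u v | u v. u \<in> P \<and> v \<in> P}"

definition PsiSpan :: "vec7 set \<Rightarrow> form2 set" where
  "PsiSpan P = module.span scale2 {Psi2 u v | u v. u \<in> P \<and> v \<in> P}"

definition inner2 :: "form2 \<Rightarrow> form2 \<Rightarrow> real" where
  "inner2 X Y = (\<Sum>i\<in>{1..7}. \<Sum>j\<in>{1..7}. X (ebasis i) (ebasis j) * Y (ebasis i) (ebasis j))"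

end

theory Submission
  imports Defs Jordan_Normal_Form.Determinant
begin

(* Since inner2 is bilinear, it suffices to pair a generator u \<and> v of Lambda2 P with a
   generator \<Psi>_wz of PsiSpan P. As \<Psi>_wz is a bilinear form, this pairing equals
   \<psi>(w,z,u,v) - \<psi>(w,z,v,u). Each coordinate 4-form in \<psi>, evaluated at four vectors,
   is a 4x4 minor of the 7x4 matrix having these vectors as columns. Four vectors of a
   3-dimensional space satisfy a nontrivial linear relation, so every such minor vanishes,
   and \<psi> vanishes on P. *)

lemma nontrivial_relation_if_dim_less_length:
  fixes vs :: "'a::euclidean_space list"
  assumes "dim P < length vs" and "set vs \<subseteq> P"
  shows "\<exists>c. (\<exists>s<length vs. c s \<noteq> 0) \<and> (\<Sum>s<length vs. c s *\<^sub>R vs ! s) = 0"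
proof (cases "distinct vs")
  case True
  have "\<not> independent (set vs)"
  proof
    assume "independent (set vs)"
    then have "card (set vs) \<le> dim P"
      using independent_card_le_dim assms(2) by blast
    with assms(1) True show False
      by (simp add: distinct_card)
  qed
  then obtain u where u: "\<exists>v\<in>set vs. u v \<noteq> 0" "(\<Sum>v\<in>set vs. u v *\<^sub>R v) = 0"
    using dependent_finite by blast
  have "(\<Sum>s<length vs. u (vs ! s) *\<^sub>R vs ! s) = (\<Sum>v\<in>set vs. u v *\<^sub>R v)"
    by (rule sum.reindex_bij_betw[OF bij_betw_nth[OF True refl refl]])
  moreover have "\<exists>s<length vs. u (vs ! s) \<noteq> 0"
    using u(1) by (metis in_set_conv_nth)
  ultimately show ?thesis
    using u(2) by auto
next
  case False
  then obtain s t where st: "s < length vs" "t < length vs" "s \<noteq> t" "vs ! s = vs ! t"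
    by (auto simp: distinct_conv_nth)
  let ?c = "\<lambda>r. of_bool (r = s) - of_bool (r = t) :: real"
  have "(\<Sum>r<length vs. ?c r *\<^sub>R vs ! r) = vs ! s - vs ! t"
    using st(1,2)
    by (simp add: scaleR_left_diff_distrib sum_subtractf of_bool_def
        if_distrib[of "\<lambda>a. a *\<^sub>R _"] cong: if_cong)
  then show ?thesis
    using st by (intro exI[of _ ?c]) auto
qed

lemma bilinear_eq_sum_Basis:
  fixes B :: "'a::euclidean_space \<Rightarrow> 'b::euclidean_space \<Rightarrow> real"
  assumes "bilinear B"
  shows "B x y = (\<Sum>a\<in>Basis. \<Sum>b\<in>Basis. inner x a * inner y b * B a b)"
proof -
  have "B x y = B (\<Sum>a\<in>Basis. inner x a *\<^sub>R a) (\<Sum>b\<in>Basis. inner y b *\<^sub>R b)"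
    by (simp add: euclidean_representation)
  also have "\<dots> = (\<Sum>(a, b)\<in>Basis \<times> Basis. B (inner x a *\<^sub>R a) (inner y b *\<^sub>R b))"
    by (rule bilinear_sum[OF assms])
  finally show ?thesis
    by (simp add: bilinear_lmul[OF assms] bilinear_rmul[OF assms] sum.cartesian_product ac_simps)
qed

lemma sum_Basis_vec_axis: "(\<Sum>b\<in>(Basis :: (real ^ 'n) set). f b) = (\<Sum>i\<in>UNIV. f (axis i 1))"
proof -
  have Basis_eq: "(Basis :: (real ^ 'n) set) = range (\<lambda>i. axis i 1)"
    by (auto simp: Basis_vec_def)
  have "inj (\<lambda>i::'n. axis i (1::real))"
    by (auto intro: injI simp: axis_eq_axis)
  from sum.reindex[OF this, of f] show ?thesis
    unfolding Basis_eq by simp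
qed

definition coord_mat :: "'n list \<Rightarrow> (real ^ 'n) list \<Rightarrow> real Matrix.mat" where
  "coord_mat I V = Matrix.mat (length I) (length V) (\<lambda>(r, s). vec_nth (V ! s) (I ! r))"

lemma coord_mat_carrier: "coord_mat I V \<in> carrier_mat (length I) (length V)"
  by (simp add: coord_mat_def)

lemma coord_mat_index:
  "r < length I \<Longrightarrow> s < length V \<Longrightarrow> coord_mat I V $$ (r, s) = vec_nth (V ! s) (I ! r)"
  by (simp add: coord_mat_def)

lemma det_coord_mat_eq_0:
  assumes "length I = length V"
    and "\<exists>s<length V. c s \<noteq> 0" and "(\<Sum>s<length V. c s *\<^sub>R V ! s) = 0"
  shows "Determinant.det (coord_mat I V) = 0"
proof -
  let ?n = "length V"
  let ?v = "Matrix.vec ?n c"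
  have "?v \<noteq> 0\<^sub>v ?n"
    using assms(2) by (metis index_vec index_zero_vec(1))
  moreover have "coord_mat I V *\<^sub>v ?v = 0\<^sub>v ?n"
  proof (rule eq_vecI)
    fix r assume "r < dim_vec (0\<^sub>v ?n)"
    then have r: "r < length I" using assms(1) by simp
    have "vec_index (coord_mat I V *\<^sub>v ?v) r = vec_nth (\<Sum>s<?n. c s *\<^sub>R V ! s) (I ! r)"
      using r by (auto simp: coord_mat_def scalar_prod_def atLeast0LessThan mult.commute)
    then show "vec_index (coord_mat I V *\<^sub>v ?v) r = vec_index (0\<^sub>v ?n) r"
      using r assms by simp
  qed (simp add: coord_mat_def assms(1))
  ultimately show ?thesis
    using det_0_iff_vec_prod_zero[of "coord_mat I V" ?n] coord_mat_carrier[of I V] assms(1)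
    by (metis vec_carrier)
qed

lemma det_coord_mat_column_expansion:
  assumes "length I = length V" and "q < length V"
  shows "Determinant.det (coord_mat I (V[q := x])) =
    (\<Sum>r<length I. vec_nth x (I ! r) * cofactor (coord_mat I (V[q := 0])) r q)"
proof -
  let ?M = "\<lambda>y. coord_mat I (V[q := y])"
  have "Determinant.det (?M x) = (\<Sum>r<length I. ?M x $$ (r, q) * cofactor (?M x) r q)"
    using laplace_expansion_column[of "?M x" "length I" q] coord_mat_carrier[of I "V[q := x]"] assms
    by simp
  also have "\<dots> = (\<Sum>r<length I. vec_nth x (I ! r) * cofactor (?M 0) r q)"
  proof (rule sum.cong[OF refl])
    fix r assume r: "r \<in> {..<length I}"
    have "mat_delete (?M x) r q = mat_delete (?M 0) r q"
      using assms by (intro eq_matI) (auto simp: mat_delete_def coord_mat_def)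
    then show "?M x $$ (r, q) * cofactor (?M x) r q = vec_nth x (I ! r) * cofactor (?M 0) r q"
      using r assms by (simp add: cofactor_def coord_mat_def)
  qed
  finally show ?thesis .
qed

lemma linear_det_coord_mat_column:
  assumes "length I = length V" and "q < length V"
  shows "linear (\<lambda>x. Determinant.det (coord_mat I (V[q := x])))"
  unfolding det_coord_mat_column_expansion[OF assms]
  by (intro linear_compose_sum) (auto intro!: linearI simp: algebra_simps)

lemma e4_eq_det:
  "e4 i j k l a b c d = Determinant.det (coord_mat (map idx7 [i, j, k, l]) [a, b, c, d])"
proof -
  let ?M = "coord_mat (map idx7 [i, j, k, l]) [a, b, c, d]"
  have "Determinant.det ?M = (\<Sum>p | p permutes {0..<4}. signof p * (\<Prod>r = 0..<4. ?M $$ (r, p r)))"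
    by (rule det_def') (simp add: coord_mat_def numeral_eq_Suc)
  also have "\<dots> = e4 i j k l a b c d"
    unfolding e4_def
  proof (rule sum.cong[OF refl])
    fix p assume "p \<in> {p. p permutes {0..<4::nat}}"
    then have "p r < 4" if "r < 4" for r
      using permutes_in_image that by fastforce
    then have "?M $$ (r, p r) = vec_nth ([a, b, c, d] ! p r) (idx7 ([i, j, k, l] ! r))"
      if "r < 4" for r
      using that by (simp add: coord_mat_index numeral_eq_Suc del: list.map)
    then have "(\<Prod>r = 0..<4. ?M $$ (r, p r)) =
        (\<Prod>r<4. vec_nth ([a, b, c, d] ! p r) (idx7 ([i, j, k, l] ! r)))"
      unfolding atLeast0LessThan by (intro prod.cong) simp_all
    then show "signof p * (\<Prod>r = 0..<4. ?M $$ (r, p r)) =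
        of_int (sign p) * (\<Prod>r<4. vec_nth ([a, b, c, d] ! p r) (idx7 ([i, j, k, l] ! r)))"
      by simp
  qed
  finally show ?thesis by simp
qed

lemma bilinear_e4: "bilinear (e4 i j k l a b)"
proof -
  have "linear (\<lambda>x. e4 i j k l a b x d)" for d
    using linear_det_coord_mat_column[of "map idx7 [i, j, k, l]" "[a, b, 0, d]" 2]
    by (simp add: e4_eq_det)
  moreover have "linear (\<lambda>x. e4 i j k l a b c x)" for c
    using linear_det_coord_mat_column[of "map idx7 [i, j, k, l]" "[a, b, c, 0]" 3]
    by (simp add: e4_eq_det)
  ultimately show ?thesis
    by (simp add: bilinear_def)
qed

lemma bilinear_psi: "bilinear (psi a b)"
  unfolding bilinear_def psi_def
  using bilinear_e4[unfolded bilinear_def]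
  by (simp add: linear_compose_sub)

lemma e4_eq_0_if_dim_less_4:
  assumes "dim P < 4" and "a \<in> P" "b \<in> P" "c \<in> P" "d \<in> P"
  shows "e4 i j k l a b c d = 0"
proof -
  have "dim P < length [a, b, c, d]" "set [a, b, c, d] \<subseteq> P"
    using assms by auto
  then obtain cf where "\<exists>s<length [a, b, c, d]. cf s \<noteq> 0"
      "(\<Sum>s<length [a, b, c, d]. cf s *\<^sub>R [a, b, c, d] ! s) = 0"
    by (blast dest: nontrivial_relation_if_dim_less_length)
  then show ?thesis
    unfolding e4_eq_det by (intro det_coord_mat_eq_0[of _ _ cf]) simp_all
qed

lemma psi_eq_0_if_dim_less_4:
  assumes "dim P < 4" and "a \<in> P" "b \<in> P" "c \<in> P" "d \<in> P"
  shows "psi a b c d = 0"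
  unfolding psi_def using e4_eq_0_if_dim_less_4[OF assms] by simp

lemma idx7_image: "idx7 ` {1..7} = UNIV"
proof -
  have "x \<in> idx7 ` {1..7}" for x :: 7
  proof (induct x)
    case (of_int z)
    then have "idx7 (nat z + 1) = of_int z" "nat z + 1 \<in> {1..7}"
      by (simp_all add: idx7_def)
    then show ?case
      by (metis image_eqI)
  qed
  then show ?thesis
    by blast
qed

lemma bij_betw_idx7: "bij_betw idx7 {1..7} UNIV"
  using idx7_image by (simp add: bij_betw_def inj_on_iff_eq_card)

lemma inner2_eq_sum_Basis: "inner2 X Y = (\<Sum>a\<in>Basis. \<Sum>b\<in>Basis. X a b * Y a b)"
  unfolding inner2_def ebasis_def sum_Basis_vec_axis
  by (subst sum.reindex_bij_betw[OF bij_betw_idx7, symmetric])+ (rule refl)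

lemma inner2_wedge2:
  assumes "bilinear Y"
  shows "inner2 (wedge2 u v) Y = Y u v - Y v u"
  unfolding inner2_eq_sum_Basis wedge2_def bilinear_eq_sum_Basis[OF assms, of u v]
    bilinear_eq_sum_Basis[OF assms, of v u]
  by (simp add: right_diff_distrib sum_subtractf mult.commute)

interpretation form2: Modules.module scale2
  by unfold_locales (auto simp: scale2_def fun_eq_iff algebra_simps)

lemma inner2_commute: "inner2 X Y = inner2 Y X"
  by (simp add: inner2_def mult.commute)

lemma inner2_zero_right: "inner2 X 0 = 0"
  by (simp add: inner2_def)

lemma inner2_add_right: "inner2 X (Y + Z) = inner2 X Y + inner2 X Z"
  by (simp add: inner2_def distrib_left sum.distrib)

lemma inner2_scale2_right: "inner2 X (scale2 c Y) = c * inner2 X Y"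
  by (simp add: inner2_def scale2_def sum_distrib_left ac_simps)

lemma subspace_inner2_eq_0: "form2.subspace {Y. inner2 X Y = 0}"
  by (simp add: form2.subspace_def inner2_zero_right inner2_add_right inner2_scale2_right)

lemma inner2_eq_0_on_spans:
  assumes "\<And>x y. x \<in> A \<Longrightarrow> y \<in> B \<Longrightarrow> inner2 x y = 0"
    and "X \<in> form2.span A" and "Y \<in> form2.span B"
  shows "inner2 X Y = 0"
proof -
  have "inner2 x Y = 0" if "x \<in> A" for x
    using assms(3) subspace_inner2_eq_0 assms(1)[OF that] by (rule form2.span_induct)
  moreover have "form2.subspace {X. inner2 X Y = 0}"
    using subspace_inner2_eq_0[of Y] by (simp add: inner2_commute)
  ultimately show ?thesis
    using assms(2) form2.span_induct by blast
qed

theorem lemma4p4: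
  fixes P :: "(real ^ 7) set"
  assumes "subspace P" and "dim P = 3"
  shows "\<forall>X\<in>Lambda2 P. \<forall>Y\<in>PsiSpan P. inner2 X Y = 0"
proof -
  have dim: "dim P < 4"
    using assms(2) by simp
  have generators: "inner2 (wedge2 u v) (Psi2 w z) = 0"
    if "u \<in> P" "v \<in> P" "w \<in> P" "z \<in> P" for u v w z
  proof -
    have "Psi2 w z = psi w z"
      unfolding Psi2_def ..
    then show ?thesis
      using inner2_wedge2[OF bilinear_psi] psi_eq_0_if_dim_less_4[OF dim] that by simp
  qed
  show ?thesis
  proof (intro ballI)
    fix X Y
    assume "X \<in> Lambda2 P" "Y \<in> PsiSpan P"
    then show "inner2 X Y = 0"
      unfolding Lambda2_def PsiSpan_def
      by (rule inner2_eq_0_on_spans[rotated]) (auto intro: generators)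
  qed
qed

end
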